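(* Let $X$ be a finitely supported subset of an invariant set $U$. (8) $\wp_{fs}(X)$ is FSM Dedekind infinite if and only if $X$ is FSM ascending infinite. (9) If $X$ is FSM Dedekind infinite, then $X$ is FSM ascending infinite; the converse fails, since $\wp_{fin}(A)$ is FSM ascending infinite but not FSM Dedekind infinite.
   Context: Framework (FSM). Work in ZF with a fixed infinite set $A$ of atoms; $S_A$ is the group of bijections of $A$ fixing all but finitely many atoms; $Fix(S)$ is the set of $\pi\in S_A$ fixing each element of $S\subseteq A$; $S$ supports $x$ if $\pi\cdot x=x$ for all $\pi\in Fix(S)$. An invariant set is an $S_A$-set all of whose elements have finite supports; subsets carry $\pi\star Z=\{\pi\cdot z:z\in Z\}$; $\wp_{fs}(X)$ is the set of subsets of $U$ contained in $X$ that are finitely supported under $\star$, and $\wp_{fin}(A)$ is the set of finite subsets of $A$. $\mathbb N$ carries the trivial action. A function is finitely supported if there is a finite $S$ such that for all $\pi\in Fix(S)$, $f(\pi\cdot x)=\pi\cdot f(x)$ and $\pi$ preserves domain and codomain. $X$ is FSM Dedekind infinite if there is a finitely supported injection from $X$ onto a finitely supported proper subset of $X$. $X$ is FSM ascending infinite if there is a sequence $(X_n)_{n\in\mathbb N}$ of finitely supported subsets of $U$ with $X_0\subseteq X_1\subseteq\cdots$, such that the map $n\mapsto X_n$ is finitely supported, $X\subseteq\bigcup_nX_n$, and there is no $n$ with $X\subseteq X_n$. *)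

theory Defs
  imports Main
begin

definition fsperm :: "('a \<Rightarrow> 'a) \<Rightarrow> bool" where
  "fsperm \<pi> \<longleftrightarrow> bij \<pi> \<and> finite {a. \<pi> a \<noteq> a}"

definition Fix :: "'a set \<Rightarrow> ('a \<Rightarrow> 'a) set" where
  "Fix S = {\<pi>. fsperm \<pi> \<and> (\<forall>a\<in>S. \<pi> a = a)}"

definition supports :: "(('a \<Rightarrow> 'a) \<Rightarrow> 'u \<Rightarrow> 'u) \<Rightarrow> 'a set \<Rightarrow> 'u \<Rightarrow> bool" where
  "supports act S x \<longleftrightarrow> (\<forall>\<pi>\<in>Fix S. act \<pi> x = x)"

definition fin_supp :: "(('a \<Rightarrow> 'a) \<Rightarrow> 'u \<Rightarrow> 'u) \<Rightarrow> 'u \<Rightarrow> bool" where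
  "fin_supp act x \<longleftrightarrow> (\<exists>S. finite S \<and> supports act S x)"

definition set_act :: "(('a \<Rightarrow> 'a) \<Rightarrow> 'u \<Rightarrow> 'u) \<Rightarrow> ('a \<Rightarrow> 'a) \<Rightarrow> 'u set \<Rightarrow> 'u set" where
  "set_act act \<pi> Z = act \<pi> ` Z"

definition atom_act :: "('a \<Rightarrow> 'a) \<Rightarrow> 'a \<Rightarrow> 'a" where
  "atom_act \<pi> a = \<pi> a"

definition invariant_set :: "(('a \<Rightarrow> 'a) \<Rightarrow> 'u \<Rightarrow> 'u) \<Rightarrow> 'u set \<Rightarrow> bool" where
  "invariant_set act U \<longleftrightarrow>
     (\<forall>\<pi> x. fsperm \<pi> \<and> x \<in> U \<longrightarrow> act \<pi> x \<in> U) \<and>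
     (\<forall>x\<in>U. act id x = x) \<and>
     (\<forall>\<pi> \<sigma> x. fsperm \<pi> \<and> fsperm \<sigma> \<and> x \<in> U \<longrightarrow> act (\<pi> \<circ> \<sigma>) x = act \<pi> (act \<sigma> x)) \<and>
     (\<forall>x\<in>U. fin_supp act x)"

definition fs_subset :: "(('a \<Rightarrow> 'a) \<Rightarrow> 'u \<Rightarrow> 'u) \<Rightarrow> 'u set \<Rightarrow> 'u set \<Rightarrow> bool" where
  "fs_subset act U X \<longleftrightarrow> X \<subseteq> U \<and> fin_supp (set_act act) X"

definition fs_pow :: "(('a \<Rightarrow> 'a) \<Rightarrow> 'u \<Rightarrow> 'u) \<Rightarrow> 'u set \<Rightarrow> 'u set set" where
  "fs_pow act X = {Y. Y \<subseteq> X \<and> fin_supp (set_act act) Y}"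

definition fs_fun :: "(('a \<Rightarrow> 'a) \<Rightarrow> 'u \<Rightarrow> 'u) \<Rightarrow> ('u \<Rightarrow> 'u) \<Rightarrow> 'u set \<Rightarrow> 'u set \<Rightarrow> bool" where
  "fs_fun act f X Y \<longleftrightarrow> f ` X \<subseteq> Y \<and>
     (\<exists>S. finite S \<and> (\<forall>\<pi>\<in>Fix S. set_act act \<pi> X = X \<and> set_act act \<pi> Y = Y \<and>
                          (\<forall>x\<in>X. f (act \<pi> x) = act \<pi> (f x))))"

definition fsm_dedekind_inf :: "(('a \<Rightarrow> 'a) \<Rightarrow> 'u \<Rightarrow> 'u) \<Rightarrow> 'u set \<Rightarrow> bool" where
  "fsm_dedekind_inf act X \<longleftrightarrow>
     (\<exists>f Y. Y \<subset> X \<and> fin_supp (set_act act) Y \<and> bij_betw f X Y \<and> fs_fun act f X X)"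

text \<open>FSM ascending infinite (relative to the invariant set U).  The sequence n \<mapsto> X_n,
  with the trivial action on nat, is finitely supported.\<close>
definition fsm_asc_inf :: "(('a \<Rightarrow> 'a) \<Rightarrow> 'u \<Rightarrow> 'u) \<Rightarrow> 'u set \<Rightarrow> 'u set \<Rightarrow> bool" where
  "fsm_asc_inf act U X \<longleftrightarrow>
     (\<exists>Xs :: nat \<Rightarrow> 'u set.
        (\<forall>n. Xs n \<subseteq> U \<and> fin_supp (set_act act) (Xs n)) \<and>
        (\<forall>n. Xs n \<subseteq> Xs (Suc n)) \<and>
        (\<exists>S. finite S \<and> (\<forall>\<pi>\<in>Fix S. \<forall>n. set_act act \<pi> (Xs n) = Xs n)) \<and>
        X \<subseteq> (\<Union>n. Xs n) \<and>
        (\<forall>n. \<not> X \<subseteq> Xs n))"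

end

theory Submission
  imports Defs "HOL-Library.Infinite_Set" "HOL-Combinatorics.Transposition"
begin

text \<open>All four statements pass through injective sequences whose terms are fixed by \<open>Fix S\<close>
  for a single finite \<open>S\<close>.  A Dedekind infinite set contains one (the orbit of a point missed by
  the injection), and shifting along one witnesses Dedekind infinity.  A supported sequence of
  elements \<open>a k\<close> of \<open>X\<close> gives the ascending cover \<open>X - {a k | k \<ge> n}\<close>; a supported sequence
  of subsets of \<open>X\<close> lets one cut \<open>X\<close> down into a supported descending chain \<open>E n\<close> that never
  stabilises at its intersection \<open>I\<close>, giving the cover \<open>(X - E n) \<union> I\<close>.  Conversely, an
  ascending cover \<open>X\<^sub>n\<close> yields infinitely many distinct supported sets \<open>X \<inter> X\<^sub>n\<close>.  For the
  finite sets of atoms the levels of bounded cardinality are an equivariant cover, while an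
  injection on them with finite support \<open>S\<close> maps each \<open>Pow (S \<union> W)\<close> into, hence onto, itself.\<close>

locale perm_action =
  fixes act :: "('a \<Rightarrow> 'a) \<Rightarrow> 'u \<Rightarrow> 'u" and U :: "'u set"
  assumes closed: "fsperm \<pi> \<Longrightarrow> x \<in> U \<Longrightarrow> act \<pi> x \<in> U"
    and act_id: "x \<in> U \<Longrightarrow> act id x = x"
    and act_comp: "fsperm \<pi> \<Longrightarrow> fsperm \<sigma> \<Longrightarrow> x \<in> U \<Longrightarrow> act (\<pi> \<circ> \<sigma>) x = act \<pi> (act \<sigma> x)"

lemma invariant_set_imp_perm_action: "invariant_set act U \<Longrightarrow> perm_action act U"
  unfolding invariant_set_def by unfold_locales blast+

lemma fsperm_bij: "fsperm \<pi> \<Longrightarrow> bij \<pi>"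
  unfolding fsperm_def by blast

lemma fsperm_inv: assumes "fsperm \<pi>" shows "fsperm (inv \<pi>)"
proof -
  have "bij \<pi>" using assms by (rule fsperm_bij)
  then have "{a. inv \<pi> a \<noteq> a} = {a. \<pi> a \<noteq> a}" by (metis bij_inv_eq_iff)
  with assms \<open>bij \<pi>\<close> show ?thesis unfolding fsperm_def by (simp add: bij_imp_bij_inv)
qed

lemma fsperm_comp: assumes "fsperm \<pi>" "fsperm \<sigma>" shows "fsperm (\<pi> \<circ> \<sigma>)"
proof -
  have "{a. (\<pi> \<circ> \<sigma>) a \<noteq> a} \<subseteq> {a. \<pi> a \<noteq> a} \<union> {a. \<sigma> a \<noteq> a}" by auto
  with assms show ?thesis unfolding fsperm_def by (meson bij_comp finite_UnI finite_subset)
qed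

lemma fsperm_transpose: "fsperm (transpose a b)"
proof -
  have "{x. transpose a b x \<noteq> x} \<subseteq> {a, b}" by (auto simp: transpose_def)
  then show ?thesis unfolding fsperm_def by (simp add: finite_subset)
qed

lemma Fix_fsperm: "\<pi> \<in> Fix S \<Longrightarrow> fsperm \<pi>"
  unfolding Fix_def by blast

lemma Fix_Un: "Fix (S \<union> T) = Fix S \<inter> Fix T"
  unfolding Fix_def by auto

lemma Fix_inv: assumes "\<pi> \<in> Fix S" shows "inv \<pi> \<in> Fix S"
proof -
  have "fsperm \<pi>" "\<forall>a\<in>S. \<pi> a = a" using assms unfolding Fix_def by auto
  moreover have "bij \<pi>" using \<open>fsperm \<pi>\<close> by (rule fsperm_bij)
  ultimately show ?thesis unfolding Fix_def
    by (auto simp: fsperm_inv) (metis bij_is_inj inv_f_eq)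
qed

lemma supports_imp_fin_supp: "supports act S x \<Longrightarrow> finite S \<Longrightarrow> fin_supp act x"
  unfolding fin_supp_def by blast

lemma supports_set_act_iff: "supports (set_act act) S Z \<longleftrightarrow> (\<forall>\<pi>\<in>Fix S. act \<pi> ` Z = Z)"
  unfolding supports_def set_act_def ..

context perm_action
begin

lemma act_cancel:
  assumes "fsperm \<pi>" "x \<in> U"
  shows "act (inv \<pi>) (act \<pi> x) = x" and "act \<pi> (act (inv \<pi>) x) = x"
proof -
  have "bij \<pi>" using assms(1) by (rule fsperm_bij)
  then have "inv \<pi> \<circ> \<pi> = id" "\<pi> \<circ> inv \<pi> = id"
    by (simp_all add: bij_is_inj bij_is_surj flip: surj_iff)
  then show "act (inv \<pi>) (act \<pi> x) = x" "act \<pi> (act (inv \<pi>) x) = x"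
    using act_comp[OF fsperm_inv[OF assms(1)] assms(1) assms(2)]
      act_comp[OF assms(1) fsperm_inv[OF assms(1)] assms(2)] act_id[OF assms(2)] by simp_all
qed

lemma inj_on_act: "fsperm \<pi> \<Longrightarrow> inj_on (act \<pi>) U"
  by (rule inj_on_inverseI[where g="act (inv \<pi>)"]) (rule act_cancel)

lemma set_action: "perm_action (set_act act) (Pow U)"
proof
  show "set_act act \<pi> Z \<in> Pow U" if "fsperm \<pi>" "Z \<in> Pow U" for \<pi> Z
    using closed that unfolding set_act_def by blast
  show "set_act act id Z = Z" if "Z \<in> Pow U" for Z
    using act_id that unfolding set_act_def by force
  show "set_act act (\<pi> \<circ> \<sigma>) Z = set_act act \<pi> (set_act act \<sigma> Z)"
    if "fsperm \<pi>" "fsperm \<sigma>" "Z \<in> Pow U" for \<pi> \<sigma> Z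
  proof -
    have "act (\<pi> \<circ> \<sigma>) ` Z = (\<lambda>x. act \<pi> (act \<sigma> x)) ` Z"
      using act_comp[OF that(1,2)] that(3) by (intro image_cong) auto
    then show ?thesis unfolding set_act_def by (simp add: image_image)
  qed
qed

text \<open>Conjugating a permutation that fixes \<open>\<pi> ` S\<close> by \<open>\<pi>\<close> gives one that fixes \<open>S\<close>.\<close>
lemma supports_act:
  assumes x: "x \<in> U" and S: "supports act S x" and \<pi>: "fsperm \<pi>"
  shows "supports act (\<pi> ` S) (act \<pi> x)"
  unfolding supports_def
proof
  fix \<sigma> assume \<sigma>: "\<sigma> \<in> Fix (\<pi> ` S)"
  have "bij \<pi>" using \<pi> by (rule fsperm_bij)
  define \<tau> where "\<tau> = inv \<pi> \<circ> \<sigma> \<circ> \<pi>"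
  have "fsperm \<tau>"
    unfolding \<tau>_def by (rule fsperm_comp[OF fsperm_comp[OF fsperm_inv[OF \<pi>] Fix_fsperm[OF \<sigma>]] \<pi>])
  moreover have "\<forall>a\<in>S. \<tau> a = a"
  proof
    fix a assume "a \<in> S"
    then have "\<sigma> (\<pi> a) = \<pi> a" using \<sigma> unfolding Fix_def by blast
    then show "\<tau> a = a" unfolding \<tau>_def using \<open>bij \<pi>\<close> by (simp add: bij_is_inj)
  qed
  ultimately have "\<tau> \<in> Fix S" unfolding Fix_def by blast
  have "\<pi> \<circ> \<tau> = \<sigma> \<circ> \<pi>"
    unfolding \<tau>_def fun_eq_iff comp_def using surj_f_inv_f[OF bij_is_surj[OF \<open>bij \<pi>\<close>]] by simp
  then have "act \<sigma> (act \<pi> x) = act \<pi> (act \<tau> x)"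
    using act_comp[OF \<pi> \<open>fsperm \<tau>\<close> x] act_comp[OF Fix_fsperm[OF \<sigma>] \<pi> x] by simp
  also have "act \<tau> x = x" using S \<open>\<tau> \<in> Fix S\<close> unfolding supports_def by blast
  finally show "act \<sigma> (act \<pi> x) = act \<pi> x" .
qed

lemma fin_supp_act:
  assumes "x \<in> U" "fin_supp act x" "fsperm \<pi>"
  shows "fin_supp act (act \<pi> x)"
proof -
  obtain S where "finite S" "supports act S x" using assms(2) unfolding fin_supp_def by blast
  then show ?thesis
    using supports_imp_fin_supp[OF supports_act[OF assms(1) _ assms(3)]] by simp
qed

lemma supports_set_actI:
  assumes "Z \<subseteq> U" and sub: "\<And>\<pi>. \<pi> \<in> Fix S \<Longrightarrow> act \<pi> ` Z \<subseteq> Z"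
  shows "supports (set_act act) S Z"
  unfolding supports_set_act_iff
proof (intro ballI equalityI)
  fix \<pi> assume \<pi>: "\<pi> \<in> Fix S"
  show "act \<pi> ` Z \<subseteq> Z" using sub[OF \<pi>] .
  show "Z \<subseteq> act \<pi> ` Z"
  proof
    fix z assume "z \<in> Z"
    then have "act (inv \<pi>) z \<in> Z" using sub[OF Fix_inv[OF \<pi>]] by blast
    moreover have "act \<pi> (act (inv \<pi>) z) = z"
      using act_cancel(2)[OF Fix_fsperm[OF \<pi>]] \<open>z \<in> Z\<close> assms(1) by blast
    ultimately show "z \<in> act \<pi> ` Z" by (metis imageI)
  qed
qed

lemma supports_set_act_Int:
  "A \<subseteq> U \<Longrightarrow> B \<subseteq> U \<Longrightarrow> supports (set_act act) S A \<Longrightarrow> supports (set_act act) S B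
    \<Longrightarrow> supports (set_act act) S (A \<inter> B)"
  unfolding supports_set_act_iff using inj_on_image_Int[OF inj_on_act[OF Fix_fsperm]] by simp

lemma supports_set_act_Diff:
  "A \<subseteq> U \<Longrightarrow> B \<subseteq> U \<Longrightarrow> supports (set_act act) S A \<Longrightarrow> supports (set_act act) S B
    \<Longrightarrow> supports (set_act act) S (A - B)"
  unfolding supports_set_act_iff using inj_on_image_set_diff[OF inj_on_act[OF Fix_fsperm]]
  by (simp add: Diff_subset_conv le_supI2)

lemma supports_set_act_INT:
  fixes E :: "nat \<Rightarrow> 'u set"
  assumes "\<And>n. E n \<subseteq> U" "\<And>n. supports (set_act act) S (E n)"
  shows "supports (set_act act) S (\<Inter>n. E n)"
  unfolding supports_set_act_iff
proof
  fix \<pi> assume "\<pi> \<in> Fix S"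
  then have "act \<pi> ` (\<Inter>n. E n) = (\<Inter>n. act \<pi> ` E n)"
    using image_INT[OF inj_on_act[OF Fix_fsperm[OF \<open>\<pi> \<in> Fix S\<close>]], of UNIV E 0] assms(1) by simp
  also have "\<dots> = (\<Inter>n. E n)"
    using assms(2) \<open>\<pi> \<in> Fix S\<close> unfolding supports_set_act_iff by simp
  finally show "act \<pi> ` (\<Inter>n. E n) = (\<Inter>n. E n)" .
qed

lemma supports_fs_pow:
  assumes "X \<subseteq> U" "supports (set_act act) S X"
  shows "supports (set_act (set_act act)) S (fs_pow act X)"
proof (rule perm_action.supports_set_actI[OF set_action])
  show "fs_pow act X \<subseteq> Pow U" using assms(1) unfolding fs_pow_def by blast
  fix \<pi> assume \<pi>: "\<pi> \<in> Fix S"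
  show "set_act act \<pi> ` fs_pow act X \<subseteq> fs_pow act X"
  proof (rule image_subsetI)
    fix Z assume "Z \<in> fs_pow act X"
    then have "Z \<subseteq> X" "fin_supp (set_act act) Z" unfolding fs_pow_def by auto
    then have "fin_supp (set_act act) (set_act act \<pi> Z)"
      using perm_action.fin_supp_act[OF set_action] Fix_fsperm[OF \<pi>] assms(1) by blast
    moreover have "set_act act \<pi> Z \<subseteq> X"
      using \<open>Z \<subseteq> X\<close> assms(2) \<pi> unfolding supports_set_act_iff set_act_def by blast
    ultimately show "set_act act \<pi> Z \<in> fs_pow act X" unfolding fs_pow_def by blast
  qed
qed

end

lemma funpow_mem: "f ` D \<subseteq> D \<Longrightarrow> x \<in> D \<Longrightarrow> (f ^^ k) x \<in> D"
  by (induction k) auto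

lemma inj_funpow_orbit:
  assumes fD: "f ` D \<subseteq> D" and inj: "inj_on f D" and x: "x \<in> D" "x \<notin> f ` D"
  shows "inj (\<lambda>k. (f ^^ k) x)"
proof (rule injI)
  have new: "f ((f ^^ k) x) \<noteq> x" for k using x funpow_mem[OF fD x(1)] by (metis image_eqI)
  fix i j show "(f ^^ i) x = (f ^^ j) x \<Longrightarrow> i = j"
  proof (induction i arbitrary: j)
    case 0
    then show ?case using new[symmetric] by (cases j) auto
  next
    case (Suc i)
    show ?case
    proof (cases j)
      case 0
      then show ?thesis using Suc.prems new by simp
    next
      case (Suc j')
      then have "f ((f ^^ i) x) = f ((f ^^ j') x)" using Suc.prems by simp
      then have "(f ^^ i) x = (f ^^ j') x"
        using inj funpow_mem[OF fD x(1)] unfolding inj_on_def by blast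
      then show ?thesis using Suc.IH Suc by simp
    qed
  qed
qed

lemma funpow_commute_fixed:
  assumes "\<And>y. y \<in> D \<Longrightarrow> g (f y) = f (g y)" "f ` D \<subseteq> D" "x \<in> D" "g x = x"
  shows "g ((f ^^ k) x) = (f ^^ k) x"
  using assms by (induction k) (simp_all add: funpow_mem)

definition seq_shift :: "(nat \<Rightarrow> 'u) \<Rightarrow> 'u \<Rightarrow> 'u" where
  "seq_shift a x = (if x \<in> range a then a (Suc (inv a x)) else x)"

lemma seq_shift_seq: "inj a \<Longrightarrow> seq_shift a (a k) = a (Suc k)"
  unfolding seq_shift_def by simp

lemma seq_shift_other: "x \<notin> range a \<Longrightarrow> seq_shift a x = x"
  unfolding seq_shift_def by simp

lemma inj_seq_shift: "inj a \<Longrightarrow> inj (seq_shift a)"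
  unfolding seq_shift_def by (rule injI) (auto split: if_splits simp: inj_eq inv_f_f)

lemma seq_shift_image:
  assumes a: "inj a" "range a \<subseteq> X"
  shows "seq_shift a ` X = X - {a 0}"
proof (intro equalityI subsetI)
  fix y assume "y \<in> seq_shift a ` X"
  then obtain x where "x \<in> X" "y = seq_shift a x" by blast
  show "y \<in> X - {a 0}"
  proof (cases "x \<in> range a")
    case True
    then show ?thesis using \<open>y = seq_shift a x\<close> a seq_shift_seq[OF a(1)] by (auto simp: inj_eq[OF a(1)])
  next
    case False
    then show ?thesis using \<open>x \<in> X\<close> \<open>y = seq_shift a x\<close> seq_shift_other[OF False] by auto
  qed
next
  fix x assume x: "x \<in> X - {a 0}"
  show "x \<in> seq_shift a ` X"
  proof (cases "x \<in> range a")
    case True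
    then obtain k where "x = a (Suc k)" using x by (metis DiffD2 insertI1 not0_implies_Suc rangeE)
    then show ?thesis using seq_shift_seq[OF a(1)] a(2) by (metis image_eqI range_subsetD)
  next
    case False
    then show ?thesis using seq_shift_other x by (metis DiffD1 image_eqI)
  qed
qed

lemma infinite_traces_split:
  assumes "infinite (range (\<lambda>i. A i \<inter> Z))"
  shows "infinite (range (\<lambda>i. A i \<inter> (Z \<inter> B))) \<or> infinite (range (\<lambda>i. A i \<inter> (Z - B)))"
proof (rule ccontr)
  let ?T = "\<lambda>Z. range (\<lambda>i. A i \<inter> Z)"
  assume "\<not> ?thesis"
  then have "finite ((\<lambda>(p, q). p \<union> q) ` (?T (Z \<inter> B) \<times> ?T (Z - B)))" by simp
  moreover have "?T Z \<subseteq> (\<lambda>(p, q). p \<union> q) ` (?T (Z \<inter> B) \<times> ?T (Z - B))"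
  proof (rule image_subsetI)
    fix i
    have "A i \<inter> Z = (\<lambda>(p, q). p \<union> q) (A i \<inter> (Z \<inter> B), A i \<inter> (Z - B))" by auto
    then show "A i \<inter> Z \<in> (\<lambda>(p, q). p \<union> q) ` (?T (Z \<inter> B) \<times> ?T (Z - B))"
      by (rule image_eqI) blast
  qed
  ultimately show False using assms finite_subset by blast
qed

text \<open>Refine \<open>X\<close> along \<open>A 0, A 1, \<dots>\<close>, always keeping the half on which the sequence still
  has infinitely many traces.  The refinement never stabilises at its intersection: once
  \<open>E k = E n\<close> for all \<open>k \<ge> n\<close>, every later trace \<open>A k \<inter> E n\<close> is \<open>E n\<close> or \<open>{}\<close>.\<close>
lemma splitting_chain:
  fixes A :: "nat \<Rightarrow> 'u set"
  assumes "inj A" "\<And>k. A k \<subseteq> X"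
  obtains E where "E 0 = X" "\<And>k. E (Suc k) = E k \<inter> A k \<or> E (Suc k) = E k - A k"
    "\<And>n. \<not> E n \<subseteq> (\<Inter>k. E k)"
proof
  define rich where "rich Z \<longleftrightarrow> infinite (range (\<lambda>i. A i \<inter> Z))" for Z
  define E where "E = rec_nat X (\<lambda>k Ek. if rich (Ek \<inter> A k) then Ek \<inter> A k else Ek - A k)"
  show E0: "E 0 = X" unfolding E_def by simp
  have E_Suc: "E (Suc k) = (if rich (E k \<inter> A k) then E k \<inter> A k else E k - A k)" for k
    unfolding E_def by simp
  then show "E (Suc k) = E k \<inter> A k \<or> E (Suc k) = E k - A k" for k by simp
  have rich_E: "rich (E k)" for k
  proof (induction k)
    case 0
    have "range (\<lambda>i. A i \<inter> X) = range A" using assms(2) by (simp add: Int_absorb2)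
    then show ?case using E0 range_inj_infinite[OF assms(1)] unfolding rich_def by simp
  next
    case (Suc k)
    then show ?case using infinite_traces_split[of A "E k" "A k"] E_Suc[of k] unfolding rich_def by auto
  qed
  have "E (Suc k) \<subseteq> E k" for k using E_Suc[of k] by auto
  then have antimono: "E m \<subseteq> E n" if "n \<le> m" for m n
    using lift_Suc_antimono_le[of E, OF _ that] by blast
  show "\<not> E n \<subseteq> (\<Inter>k. E k)" for n
  proof
    assume "E n \<subseteq> (\<Inter>k. E k)"
    then have stable: "E k = E n" if "n \<le> k" for k using antimono[OF that] by blast
    have trace: "A k \<inter> E n \<in> {E n, {}}" if "n \<le> k" for k
    proof -
      have "E (Suc k) = E n" "E k = E n" using stable[of "Suc k"] stable[OF that] that by simp_all
      then show ?thesis using E_Suc[of k] by (cases "rich (E k \<inter> A k)") auto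
    qed
    have "range (\<lambda>i. A i \<inter> E n) \<subseteq> (\<lambda>i. A i \<inter> E n) ` {..<n} \<union> {E n, {}}"
    proof (rule image_subsetI)
      fix i show "A i \<inter> E n \<in> (\<lambda>i. A i \<inter> E n) ` {..<n} \<union> {E n, {}}"
        using trace[of i] by (cases "i < n") auto
    qed
    then have "finite (range (\<lambda>i. A i \<inter> E n))" by (rule finite_subset) simp
    then show False using rich_E[of n] unfolding rich_def by simp
  qed
qed

lemma dedekind_inf_imp_supported_sequence:
  assumes D: "fsm_dedekind_inf act X" and fs: "\<forall>x\<in>X. fin_supp act x"
  obtains S and a :: "nat \<Rightarrow> 'u"
  where "finite S" "supports (set_act act) S X" "inj a" "range a \<subseteq> X" "\<And>k. supports act S (a k)"
proof -
  obtain f Y where "Y \<subset> X" and bij: "bij_betw f X Y" and f: "fs_fun act f X X"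
    using D unfolding fsm_dedekind_inf_def by blast
  have fX: "f ` X \<subseteq> X" using f unfolding fs_fun_def by (rule conjunct1)
  obtain Sf where "finite Sf" and Sf: "\<forall>\<pi>\<in>Fix Sf.
      set_act act \<pi> X = X \<and> set_act act \<pi> X = X \<and> (\<forall>x\<in>X. f (act \<pi> x) = act \<pi> (f x))"
    using f unfolding fs_fun_def by (elim conjE exE)
  obtain x where x: "x \<in> X" "x \<notin> f ` X"
    using \<open>Y \<subset> X\<close> bij_betw_imp_surj_on[OF bij] by blast
  obtain Sx where "finite Sx" "supports act Sx x" using fs x(1) unfolding fin_supp_def by blast
  define S where "S = Sf \<union> Sx"
  define a where "a = (\<lambda>k. (f ^^ k) x)"
  show thesis
  proof
    show "finite S" unfolding S_def using \<open>finite Sf\<close> \<open>finite Sx\<close> by simp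
    show "supports (set_act act) S X"
      using Sf unfolding supports_def S_def Fix_Un by blast
    show "inj a" unfolding a_def using inj_funpow_orbit[OF fX bij_betw_imp_inj_on[OF bij] x] .
    show "range a \<subseteq> X" unfolding a_def using funpow_mem[OF fX x(1)] by blast
    show "supports act S (a k)" for k
      unfolding supports_def
    proof
      fix \<pi> assume \<pi>: "\<pi> \<in> Fix S"
      then have "\<pi> \<in> Fix Sf" "\<pi> \<in> Fix Sx" unfolding S_def Fix_Un by blast+
      then have "\<And>y. y \<in> X \<Longrightarrow> act \<pi> (f y) = f (act \<pi> y)" "act \<pi> x = x"
        using Sf \<open>supports act Sx x\<close> unfolding supports_def by auto
      then show "act \<pi> (a k) = a k"
        unfolding a_def using funpow_commute_fixed[OF _ fX x(1)] by blast
    qed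
  qed
qed

context perm_action
begin

text \<open>\<open>act \<pi>\<close> commutes with the shift: it fixes the sequence pointwise and, being injective,
  maps the rest of \<open>X\<close> into the complement of the sequence.\<close>
lemma supported_sequence_imp_dedekind_inf:
  fixes a :: "nat \<Rightarrow> 'u"
  assumes XU: "X \<subseteq> U" and "finite S" and SX: "supports (set_act act) S X"
    and a: "inj a" "range a \<subseteq> X" and Sa: "\<And>k. supports act S (a k)"
  shows "fsm_dedekind_inf act X"
proof -
  have equivariant: "seq_shift a (act \<pi> x) = act \<pi> (seq_shift a x)"
    if \<pi>: "\<pi> \<in> Fix S" and "x \<in> X" for \<pi> x
  proof -
    have fixed: "act \<pi> (a k) = a k" for k using Sa \<pi> unfolding supports_def by blast
    show ?thesis
    proof (cases "x \<in> range a")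
      case True
      then show ?thesis using fixed seq_shift_seq[OF a(1)] by auto
    next
      case False
      have "act \<pi> x \<notin> range a"
      proof
        assume "act \<pi> x \<in> range a"
        then obtain k where "act \<pi> x = act \<pi> (a k)" using fixed by (metis rangeE)
        then have "x = a k" using inj_on_act[OF Fix_fsperm[OF \<pi>]] \<open>x \<in> X\<close> a(2) XU
          unfolding inj_on_def by blast
        with False show False by blast
      qed
      then show ?thesis using seq_shift_other[OF False] seq_shift_other[of "act \<pi> x"] by simp
    qed
  qed
  have "supports (set_act act) S {a 0}"
    using Sa[of 0] unfolding supports_def set_act_def by simp
  with XU SX a(2) have "fin_supp (set_act act) (X - {a 0})"
    by (intro supports_imp_fin_supp[OF supports_set_act_Diff \<open>finite S\<close>]) auto
  moreover have "X - {a 0} \<subset> X" using a(2) by auto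
  moreover have "bij_betw (seq_shift a) X (X - {a 0})"
    using bij_betw_imageI[OF inj_on_subset[OF inj_seq_shift[OF a(1)] subset_UNIV] seq_shift_image[OF a]] .
  moreover have "fs_fun act (seq_shift a) X X"
    unfolding fs_fun_def
  proof (intro conjI exI[of _ S] ballI)
    show "seq_shift a ` X \<subseteq> X" using seq_shift_image[OF a] by blast
    show "finite S" by fact
    fix \<pi> assume "\<pi> \<in> Fix S"
    then show "set_act act \<pi> X = X" using SX unfolding supports_def by blast
    then show "set_act act \<pi> X = X" .
    show "seq_shift a (act \<pi> x) = act \<pi> (seq_shift a x)" if "x \<in> X" for x
      using equivariant \<open>\<pi> \<in> Fix S\<close> that .
  qed
  ultimately show ?thesis unfolding fsm_dedekind_inf_def by blast
qed

lemma asc_inf_imp_supported_sequence: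
  assumes XU: "X \<subseteq> U" and "fin_supp (set_act act) X" and "fsm_asc_inf act U X"
  obtains S and P :: "nat \<Rightarrow> 'u set"
  where "finite S" "inj P" "\<And>k. P k \<subseteq> X" "\<And>k. supports (set_act act) S (P k)"
proof -
  obtain SX where "finite SX" and SX: "supports (set_act act) SX X"
    using assms(2) unfolding fin_supp_def by auto
  obtain Xs :: "nat \<Rightarrow> 'u set" and S1
    where Xs: "\<forall>n. Xs n \<subseteq> U \<and> fin_supp (set_act act) (Xs n)" "\<forall>n. Xs n \<subseteq> Xs (Suc n)"
      and "finite S1" and S1: "\<forall>\<pi>\<in>Fix S1. \<forall>n. set_act act \<pi> (Xs n) = Xs n"
      and cover: "X \<subseteq> (\<Union>n. Xs n)" and proper: "\<forall>n. \<not> X \<subseteq> Xs n"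
    using assms(3) unfolding fsm_asc_inf_def by (elim exE conjE) auto
  define S where "S = S1 \<union> SX"
  define Q where "Q n = X \<inter> Xs n" for n
  have "finite S" unfolding S_def using \<open>finite S1\<close> \<open>finite SX\<close> by simp
  have "supports (set_act act) S (Xs n)" for n
    using S1 unfolding supports_def S_def Fix_Un by auto
  moreover have "supports (set_act act) S X"
    using SX unfolding supports_def S_def Fix_Un by auto
  ultimately have Q_supp: "supports (set_act act) S (Q n)" for n
    unfolding Q_def using supports_set_act_Int XU Xs(1) by auto
  have "infinite (range Q)"
  proof
    assume "finite (range Q)"
    have "mono Xs" using Xs(2) by (simp add: mono_iff_le_Suc)
    then have "Q i \<subseteq> Q j \<or> Q j \<subseteq> Q i" for i j
      unfolding Q_def mono_def using nat_le_linear[of i j] by auto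
    then have "subset.chain UNIV (range Q)" unfolding subset.chain_def by auto
    then obtain n where "\<Union>(range Q) = Q n"
      using Union_in_chain[OF \<open>finite (range Q)\<close>] by auto
    moreover have "X \<subseteq> \<Union>(range Q)" using cover unfolding Q_def by auto
    ultimately show False using proper unfolding Q_def by auto
  qed
  then obtain P :: "nat \<Rightarrow> 'u set" where "inj P" "range P \<subseteq> range Q"
    unfolding infinite_iff_countable_subset by auto
  moreover have "P k \<subseteq> X" "supports (set_act act) S (P k)" for k
  proof -
    obtain n where "P k = Q n" using \<open>range P \<subseteq> range Q\<close> by (metis rangeE range_subsetD)
    then show "P k \<subseteq> X" "supports (set_act act) S (P k)" using Q_supp unfolding Q_def by auto
  qed
  ultimately show thesis using that \<open>finite S\<close> by auto
qed

lemma descending_chain_imp_asc_inf: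
  fixes E :: "nat \<Rightarrow> 'u set"
  assumes XU: "X \<subseteq> U" and "finite S" and SX: "supports (set_act act) S X"
    and EX: "\<And>n. E n \<subseteq> X" and decr: "\<And>n. E (Suc n) \<subseteq> E n"
    and SE: "\<And>n. supports (set_act act) S (E n)" and unstable: "\<And>n. \<not> E n \<subseteq> (\<Inter>k. E k)"
  shows "fsm_asc_inf act U X"
proof -
  define I where "I = (\<Inter>k. E k)"
  define Xs where "Xs n = (X - E n) \<union> I" for n
  have EU: "E n \<subseteq> U" for n using EX XU by auto
  have "supports (set_act act) S I"
    unfolding I_def using supports_set_act_INT[OF EU SE] .
  then have SXs: "supports (set_act act) S (Xs n)" for n
    using supports_set_act_Diff[OF XU EU SX SE]
    unfolding Xs_def supports_set_act_iff by (simp add: image_Un)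
  have "Xs n \<subseteq> U \<and> fin_supp (set_act act) (Xs n)" for n
    using XU EU[of 0] supports_imp_fin_supp[OF SXs \<open>finite S\<close>] unfolding Xs_def I_def by auto
  moreover have "Xs n \<subseteq> Xs (Suc n)" for n unfolding Xs_def using decr by auto
  moreover have "\<forall>\<pi>\<in>Fix S. \<forall>n. set_act act \<pi> (Xs n) = Xs n" using SXs unfolding supports_def by auto
  moreover have "X \<subseteq> (\<Union>n. Xs n)" unfolding Xs_def I_def by auto
  moreover have "\<not> X \<subseteq> Xs n" for n using unstable[of n] EX[of n] unfolding Xs_def I_def by auto
  ultimately show ?thesis unfolding fsm_asc_inf_def using \<open>finite S\<close> by auto
qed

lemma dedekind_inf_imp_asc_inf:
  assumes XU: "X \<subseteq> U" and fs: "\<forall>x\<in>X. fin_supp act x" and D: "fsm_dedekind_inf act X"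
  shows "fsm_asc_inf act U X"
proof -
  obtain S and a :: "nat \<Rightarrow> 'u" where "finite S" and SX: "supports (set_act act) S X"
    and "inj a" and aX: "range a \<subseteq> X" and Sa: "\<And>k. supports act S (a k)"
    using dedekind_inf_imp_supported_sequence[OF D fs] by auto
  define E where "E n = a ` {n..}" for n
  show ?thesis
  proof (rule descending_chain_imp_asc_inf[OF XU \<open>finite S\<close> SX])
    show "E n \<subseteq> X" for n unfolding E_def using aX by auto
    show "E (Suc n) \<subseteq> E n" for n unfolding E_def by auto
    show "supports (set_act act) S (E n)" for n
      unfolding supports_set_act_iff
    proof
      fix \<pi> assume "\<pi> \<in> Fix S"
      then have "act \<pi> (a k) = a k" for k using Sa unfolding supports_def by auto
      then show "act \<pi> ` E n = E n" unfolding E_def by (simp add: image_image)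
    qed
    show "\<not> E n \<subseteq> (\<Inter>k. E k)" for n
    proof
      assume "E n \<subseteq> (\<Inter>k. E k)"
      then have "a n \<in> a ` {Suc n..}" unfolding E_def by auto
      then show False using \<open>inj a\<close> by (auto simp: inj_eq)
    qed
  qed
qed

lemma fs_pow_dedekind_inf_imp_asc_inf:
  assumes XU: "X \<subseteq> U" and "fin_supp (set_act act) X"
    and D: "fsm_dedekind_inf (set_act act) (fs_pow act X)"
  shows "fsm_asc_inf act U X"
proof -
  obtain SX where "finite SX" and SX: "supports (set_act act) SX X"
    using assms(2) unfolding fin_supp_def by auto
  have "\<forall>Y\<in>fs_pow act X. fin_supp (set_act act) Y" unfolding fs_pow_def by auto
  then obtain SA and A :: "nat \<Rightarrow> 'u set" where "finite SA" "inj A"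
    and AX: "range A \<subseteq> fs_pow act X" and SA: "\<And>k. supports (set_act act) SA (A k)"
    using dedekind_inf_imp_supported_sequence[OF D] by metis
  have AX': "A k \<subseteq> X" for k using AX unfolding fs_pow_def by auto
  obtain E where E0: "E 0 = X" and E_Suc: "\<And>k. E (Suc k) = E k \<inter> A k \<or> E (Suc k) = E k - A k"
    and unstable: "\<And>n. \<not> E n \<subseteq> (\<Inter>k. E k)"
    using splitting_chain[OF \<open>inj A\<close> AX'] by auto
  define S where "S = SA \<union> SX"
  have EX: "E n \<subseteq> X" for n
  proof (induction n)
    case (Suc n)
    then show ?case using E_Suc[of n] by auto
  qed (simp add: E0)
  have SE: "supports (set_act act) S (E n)" for n
  proof (induction n)
    case 0
    show ?case using SX E0 unfolding supports_def S_def Fix_Un by auto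
  next
    case (Suc n)
    have "supports (set_act act) S (A n)" using SA unfolding supports_def S_def Fix_Un by auto
    moreover have "E n \<subseteq> U" "A n \<subseteq> U" using EX[of n] AX'[of n] XU by auto
    ultimately show ?case
      using E_Suc[of n] supports_set_act_Int[OF _ _ Suc.IH] supports_set_act_Diff[OF _ _ Suc.IH]
      by auto
  qed
  show ?thesis
  proof (rule descending_chain_imp_asc_inf[OF XU _ _ EX _ SE unstable])
    show "finite S" unfolding S_def using \<open>finite SA\<close> \<open>finite SX\<close> by simp
    show "supports (set_act act) S X" using SX unfolding supports_def S_def Fix_Un by auto
    show "E (Suc n) \<subseteq> E n" for n using E_Suc[of n] by auto
  qed
qed

lemma asc_inf_imp_fs_pow_dedekind_inf:
  assumes XU: "X \<subseteq> U" and "fin_supp (set_act act) X" and "fsm_asc_inf act U X"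
  shows "fsm_dedekind_inf (set_act act) (fs_pow act X)"
proof -
  obtain SX where "finite SX" and SX: "supports (set_act act) SX X"
    using assms(2) unfolding fin_supp_def by auto
  obtain SP and P :: "nat \<Rightarrow> 'u set" where "finite SP" "inj P"
    and PX: "\<And>k. P k \<subseteq> X" and SP: "\<And>k. supports (set_act act) SP (P k)"
    using asc_inf_imp_supported_sequence[OF assms] by auto
  define S where "S = SP \<union> SX"
  have "finite S" unfolding S_def using \<open>finite SP\<close> \<open>finite SX\<close> by simp
  have SP': "supports (set_act act) S (P k)" for k
    using SP unfolding supports_def S_def Fix_Un by auto
  show ?thesis
  proof (rule perm_action.supported_sequence_imp_dedekind_inf[OF set_action _ \<open>finite S\<close> _ \<open>inj P\<close>])
    show "fs_pow act X \<subseteq> Pow U" using XU unfolding fs_pow_def by auto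
    have "supports (set_act act) S X" using SX unfolding supports_def S_def Fix_Un by auto
    then show "supports (set_act (set_act act)) S (fs_pow act X)" by (rule supports_fs_pow[OF XU])
    show "range P \<subseteq> fs_pow act X"
      using PX supports_imp_fin_supp[OF SP' \<open>finite S\<close>] unfolding fs_pow_def by auto
    show "supports (set_act act) S (P k)" for k by (rule SP')
  qed
qed

end

lemma set_act_atom_act: "set_act atom_act \<pi> Y = \<pi> ` Y"
  unfolding set_act_def atom_act_def by simp

lemma perm_action_atom_act: "perm_action atom_act UNIV"
  by unfold_locales (simp_all add: atom_act_def)

lemma supports_set_act_atom_act: "Y \<subseteq> S \<Longrightarrow> supports (set_act atom_act) S Y"
  unfolding supports_def set_act_atom_act
proof
  fix \<pi> assume "Y \<subseteq> S" "\<pi> \<in> Fix S"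
  then have "\<pi> ` Y = id ` Y" unfolding Fix_def by (intro image_cong) auto
  then show "\<pi> ` Y = Y" by simp
qed

lemma finite_subsets_asc_inf:
  assumes "infinite (UNIV :: 'a set)"
  shows "fsm_asc_inf (set_act atom_act) (fs_pow atom_act (UNIV :: 'a set)) {Y :: 'a set. finite Y}"
proof -
  define Xs where "Xs n = {Y :: 'a set. finite Y \<and> card Y \<le> n}" for n
  have "Y \<in> fs_pow atom_act UNIV" if "finite Y" for Y :: "'a set"
    unfolding fs_pow_def using supports_imp_fin_supp[OF supports_set_act_atom_act[OF subset_refl] that] by simp
  then have Xs_fs_pow: "Xs n \<subseteq> fs_pow atom_act UNIV" for n unfolding Xs_def by auto
  have SXs: "supports (set_act (set_act atom_act)) {} (Xs n)" for n
  proof (rule perm_action.supports_set_actI[OF perm_action.set_action[OF perm_action_atom_act]])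
    show "Xs n \<subseteq> Pow UNIV" by simp
    fix \<pi> :: "'a \<Rightarrow> 'a"
    have "card (\<pi> ` Y) \<le> n" if "card Y \<le> n" "finite Y" for Y
      using card_image_le[OF that(2), of \<pi>] that(1) by linarith
    then show "set_act atom_act \<pi> ` Xs n \<subseteq> Xs n"
      unfolding Xs_def set_act_atom_act by auto
  qed
  have "\<not> {Y :: 'a set. finite Y} \<subseteq> Xs n" for n
  proof -
    obtain Y :: "'a set" where "finite Y" "card Y = Suc n"
      using infinite_arbitrarily_large[OF assms, of "Suc n"] by auto
    then have "Y \<in> {Y. finite Y}" "Y \<notin> Xs n" unfolding Xs_def by simp_all
    then show ?thesis by blast
  qed
  moreover have "{Y :: 'a set. finite Y} \<subseteq> (\<Union>n. Xs n)" unfolding Xs_def by auto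
  moreover have "Xs n \<subseteq> Xs (Suc n)" for n unfolding Xs_def by auto
  moreover have "\<forall>\<pi>\<in>Fix {}. \<forall>n. set_act (set_act atom_act) \<pi> (Xs n) = Xs n"
    using SXs unfolding supports_def by simp
  moreover have "fin_supp (set_act (set_act atom_act)) (Xs n)" for n
    using supports_imp_fin_supp[OF SXs] by simp
  ultimately show ?thesis
    unfolding fsm_asc_inf_def using Xs_fs_pow by (intro exI[of _ Xs] conjI exI[of _ "{}"]) auto
qed

text \<open>If an atom \<open>b \<in> f Z\<close> lay outside \<open>S \<union> Z\<close>, swapping it with a fresh atom would fix \<open>S\<close> and
  \<open>Z\<close>, hence \<open>f Z\<close>, but move \<open>b\<close> out of \<open>f Z\<close>.\<close>
lemma equivariant_finite_set_map_subset:
  fixes f :: "'a set \<Rightarrow> 'a set"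
  assumes "infinite (UNIV :: 'a set)" "finite S" "finite Z" "finite (f Z)"
    and equivariant: "\<And>\<pi>. \<pi> \<in> Fix S \<Longrightarrow> f (\<pi> ` Z) = \<pi> ` f Z"
  shows "f Z \<subseteq> S \<union> Z"
proof
  fix b assume b: "b \<in> f Z"
  show "b \<in> S \<union> Z"
  proof (rule ccontr)
    assume "b \<notin> S \<union> Z"
    obtain c where c: "c \<notin> S \<union> Z \<union> f Z"
      using ex_new_if_finite[OF assms(1)] assms(2-4) by (metis finite_UnI)
    have "\<forall>x\<in>S \<union> Z. transpose b c x = x"
      using \<open>b \<notin> S \<union> Z\<close> c by (auto simp: transpose_def)
    then have "transpose b c \<in> Fix S" "transpose b c ` Z = Z"
      unfolding Fix_def by (auto simp: fsperm_transpose intro: image_cong[where g=id, simplified])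
    then have "f Z = transpose b c ` f Z" using equivariant by metis
    moreover have "transpose b c b \<in> transpose b c ` f Z" using b by (rule imageI)
    ultimately show False using c by simp
  qed
qed

lemma finite_subsets_not_dedekind_inf:
  assumes "infinite (UNIV :: 'a set)"
  shows "\<not> fsm_dedekind_inf (set_act atom_act) {Y :: 'a set. finite Y}"
proof
  let ?X = "{Y :: 'a set. finite Y}"
  assume "fsm_dedekind_inf (set_act atom_act) ?X"
  then obtain f Y where "Y \<subset> ?X" and bij: "bij_betw f ?X Y"
    and f: "fs_fun (set_act atom_act) f ?X ?X"
    unfolding fsm_dedekind_inf_def by auto
  obtain S where "finite S" and S: "\<forall>\<pi>\<in>Fix S. \<forall>Z\<in>?X. f (\<pi> ` Z) = \<pi> ` f Z"
    using f unfolding fs_fun_def set_act_atom_act by auto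
  have f_fin: "finite (f Z)" if "finite Z" for Z using f that unfolding fs_fun_def by auto
  have "W \<in> Y" if "finite W" for W
  proof -
    let ?P = "Pow (S \<union> W)"
    have "?P \<subseteq> ?X" using \<open>finite S\<close> \<open>finite W\<close> by (auto intro: finite_subset)
    have "f ` ?P \<subseteq> ?P"
    proof
      fix V assume "V \<in> f ` ?P"
      then obtain Z where "Z \<in> ?P" "V = f Z" by auto
      moreover have "finite Z" using \<open>Z \<in> ?P\<close> \<open>?P \<subseteq> ?X\<close> by auto
      then have "f Z \<subseteq> S \<union> Z"
        using equivariant_finite_set_map_subset[where f = f and Z = Z,
            OF assms \<open>finite S\<close> \<open>finite Z\<close> f_fin[OF \<open>finite Z\<close>]] S by auto
      ultimately show "V \<in> ?P" by auto
    qed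
    moreover have "inj_on f ?P" using bij_betw_imp_inj_on[OF bij] \<open>?P \<subseteq> ?X\<close> by (rule inj_on_subset)
    ultimately have "f ` ?P = ?P" using \<open>finite S\<close> \<open>finite W\<close> by (intro endo_inj_surj) auto
    then have "W \<in> f ` ?P" by auto
    then have "W \<in> f ` ?X" using image_mono[OF \<open>?P \<subseteq> ?X\<close>] by (rule subsetD[rotated])
    then show "W \<in> Y" using bij_betw_imp_surj_on[OF bij] by simp
  qed
  with \<open>Y \<subset> ?X\<close> show False by auto
qed

theorem mainTheorem10:
  fixes act :: "('a \<Rightarrow> 'a) \<Rightarrow> 'u \<Rightarrow> 'u" and U X :: "'u set"
  assumes atoms_inf: "infinite (UNIV :: 'a set)"
    and U_inv: "invariant_set act U"
    and X_fs: "fs_subset act U X"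
  shows "(fsm_dedekind_inf (set_act act) (fs_pow act X) \<longleftrightarrow> fsm_asc_inf act U X)
       \<and> (fsm_dedekind_inf act X \<longrightarrow> fsm_asc_inf act U X)
       \<and> fsm_asc_inf (set_act atom_act) (fs_pow atom_act (UNIV :: 'a set)) {Y :: 'a set. finite Y}
       \<and> \<not> fsm_dedekind_inf (set_act atom_act) {Y :: 'a set. finite Y}"
proof -
  interpret perm_action act U using U_inv by (rule invariant_set_imp_perm_action)
  have XU: "X \<subseteq> U" and X: "fin_supp (set_act act) X" using X_fs unfolding fs_subset_def by auto
  have "\<forall>x\<in>X. fin_supp act x" using U_inv XU unfolding invariant_set_def by auto
  then show ?thesis
    using fs_pow_dedekind_inf_imp_asc_inf[OF XU X] asc_inf_imp_fs_pow_dedekind_inf[OF XU X]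
      dedekind_inf_imp_asc_inf[OF XU] finite_subsets_asc_inf[OF atoms_inf]
      finite_subsets_not_dedekind_inf[OF atoms_inf]
    by auto
qed

end
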